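(* Let $M\in(0,1)$ and $x\in(0,1)$. The map $V\mapsto Y_{M,V}(x)=\int_0^xF_{M,V}(t)\,dt$ is strictly increasing on $(0,M-M^2)$.
   Context: For $M\in(0,1)$, $0<V<M-M^2$, $F_{M,V}$ is the distribution function of the Beta$(\alpha,\beta)$ law with $\alpha=\frac{M(M-M^2-V)}{V}$, $\beta=\frac{(1-M)(M-M^2-V)}{V}$, i.e. the Beta law with mean $M$ and variance $V$. *)

theory Defs
  imports "HOL-Analysis.Analysis"
begin

text \<open>Parameters of the Beta law with mean M and variance V.\<close>
definition beta_alpha :: "real \<Rightarrow> real \<Rightarrow> real" where
  "beta_alpha M V = M * (M - M^2 - V) / V"

definition beta_beta :: "real \<Rightarrow> real \<Rightarrow> real" where
  "beta_beta M V = (1 - M) * (M - M^2 - V) / V"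

definition beta_density :: "real \<Rightarrow> real \<Rightarrow> real \<Rightarrow> real" where
  "beta_density a b t =
     (if 0 < t \<and> t < 1 then t powr (a - 1) * (1 - t) powr (b - 1) / Beta a b else 0)"

definition F_MV :: "real \<Rightarrow> real \<Rightarrow> real \<Rightarrow> real" where
  "F_MV M V t = (LBINT s:{..t}. beta_density (beta_alpha M V) (beta_beta M V) s)"

definition Y_MV :: "real \<Rightarrow> real \<Rightarrow> real \<Rightarrow> real" where
  "Y_MV M V x = (LBINT t:{0..x}. F_MV M V t)"

end

theory Submission
  imports Defs
begin

(*
  By Fubini, Y_{M,V}(x) is the integral of (x - s)^+ against the Beta density f.
  The Beta law with mean M and variance V has parameters M n and (1 - M) n with
  n = (M - M^2 - V) / V, so raising V lowers both parameters and keeps the mean.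
  For such densities f1 (larger parameters) and f2, ln (f2 / f1) is convex on (0, 1)
  and tends to infinity at 0, hence g = f2 - f1 is positive, then negative, then
  positive, changing sign at p < q.  As g has total mass 0 and mean 0, the integral
  of g h equals that of g (h - l) for any affine l; taking for l the chord of the
  hinge h s = (x - s)^+ through p and q makes (h - l) g nonnegative, and positive
  on an interval.
*)

lemma Beta_real_pos: "a > 0 \<Longrightarrow> b > 0 \<Longrightarrow> Beta a b > (0::real)"
  unfolding Beta_def by (intro divide_pos_pos mult_pos_pos Gamma_real_pos) auto

lemma beta_density_nonneg: "a > 0 \<Longrightarrow> b > 0 \<Longrightarrow> beta_density a b s \<ge> 0"
  unfolding beta_density_def using Beta_real_pos[of a b] by auto

lemma beta_density_eq_0: "\<not> (0 < s \<and> s < 1) \<Longrightarrow> beta_density a b s = 0"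
  unfolding beta_density_def by auto

lemma beta_density_pos: "0 < a \<Longrightarrow> 0 < b \<Longrightarrow> 0 < s \<Longrightarrow> s < 1 \<Longrightarrow> 0 < beta_density a b s"
  unfolding beta_density_def using Beta_real_pos[of a b] by simp

lemma ln_beta_density:
  "0 < a \<Longrightarrow> 0 < b \<Longrightarrow> 0 < s \<Longrightarrow> s < 1 \<Longrightarrow>
    ln (beta_density a b s) = (a - 1) * ln s + (b - 1) * ln (1 - s) - ln (Beta a b)"
  unfolding beta_density_def using Beta_real_pos[of a b] by (simp add: ln_mult ln_div)

lemma beta_density_indicator:
  "beta_density a b s = indicator {0..1} s * (s powr (a - 1) * (1 - s) powr (b - 1)) / Beta a b"
  unfolding beta_density_def by (auto simp: indicator_def)

lemma borel_measurable_beta_density [measurable]: "beta_density a b \<in> borel_measurable borel"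
  unfolding beta_density_indicator[abs_def] by measurable

lemma lborel_integral_Beta:
  fixes a b :: real
  assumes "a > 0" "b > 0"
  defines "u \<equiv> \<lambda>t. indicator {0..1} t * (t powr (a - 1) * (1 - t) powr (b - 1))"
  shows "integrable lborel u" "(LINT t|lborel. u t) = Beta a b"
proof -
  have Beta: "set_integrable lborel {0..1} (\<lambda>t. t powr (a - 1) * (1 - t) powr (b - 1))"
    using integrable_Beta[OF assms(1,2)] .
  then show "integrable lborel u"
    by (simp add: u_def set_integrable_def)
  have "(LINT t|lborel. u t) = integral {0..1} (\<lambda>t. t powr (a - 1) * (1 - t) powr (b - 1))"
    using set_borel_integral_eq_integral(2)[OF Beta] by (simp add: u_def set_lebesgue_integral_def)
  also have "\<dots> = Beta a b"
    using has_integral_Beta_real[OF assms(1,2)] by (rule integral_unique)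
  finally show "(LINT t|lborel. u t) = Beta a b" .
qed

lemma beta_density_integrable: "a > 0 \<Longrightarrow> b > 0 \<Longrightarrow> integrable lborel (beta_density a b)"
  using lborel_integral_Beta(1)[of a b] by (simp add: beta_density_indicator[abs_def])

lemma integral_beta_density: "a > 0 \<Longrightarrow> b > 0 \<Longrightarrow> (LINT s|lborel. beta_density a b s) = 1"
  using lborel_integral_Beta(2)[of a b] Beta_real_pos[of a b]
  by (simp add: beta_density_indicator[abs_def])

lemma mult_beta_density:
  "s * beta_density a b s = indicator {0..1} s * (s powr (a + 1 - 1) * (1 - s) powr (b - 1)) / Beta a b"
proof (cases "0 < s")
  case True
  then have "s * s powr (a - 1) = s powr (a + 1 - 1)"
    by (simp add: powr_add[symmetric] powr_mult_base)
  then show ?thesis by (simp add: beta_density_indicator)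
qed (auto simp: beta_density_indicator indicator_def)

lemma beta_density_mean_integrable:
  "a > 0 \<Longrightarrow> b > 0 \<Longrightarrow> integrable lborel (\<lambda>s. s * beta_density a b s)"
  using lborel_integral_Beta(1)[of "a + 1" b] by (simp add: mult_beta_density)

lemma integral_beta_density_mean:
  assumes "a > 0" "b > 0"
  shows "(LINT s|lborel. s * beta_density a b s) = a / (a + b)"
proof -
  have "a \<notin> \<int>\<^sub>\<le>\<^sub>0" using assms by (auto elim!: nonpos_Ints_cases)
  then show ?thesis
    using lborel_integral_Beta(2)[of "a + 1" b] Beta_plus1_left[of a b] Beta_real_pos[of a b] assms
    by (simp add: mult_beta_density field_simps)
qed

lemma integral_pos_of_pos_on_interval:
  fixes u :: "real \<Rightarrow> real"
  assumes "integrable lborel u" "AE s in lborel. 0 \<le> u s"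
    and "c < d" "\<And>s. c < s \<Longrightarrow> s < d \<Longrightarrow> 0 < u s"
  shows "0 < (LINT s|lborel. u s)"
proof -
  have "\<not> (AE s in lborel. u s = 0)"
  proof
    assume "AE s in lborel. u s = 0"
    then have "AE s in lborel. s \<notin> {c<..<d}"
      by eventually_elim (use assms(4) in force)
    then have "emeasure lborel {c<..<d} = 0"
      by (subst AE_iff_measurable[symmetric]) auto
    then show False using \<open>c < d\<close> by simp
  qed
  then have "(LINT s|lborel. u s) \<noteq> 0"
    using integral_nonneg_eq_0_iff_AE[OF assms(1,2)] by simp
  moreover have "0 \<le> (LINT s|lborel. u s)"
    using assms(2) by (rule integral_nonneg_AE)
  ultimately show ?thesis by simp
qed

lemma neg_point_of_integral_eq_0:
  fixes g :: "real \<Rightarrow> real"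
  assumes "integrable lborel g" "(LINT s|lborel. g s) = 0"
    and "c < d" "\<And>s. c < s \<Longrightarrow> s < d \<Longrightarrow> 0 < g s"
  shows "\<exists>s. g s < 0"
proof (rule ccontr)
  assume "\<not> ?thesis"
  then have "AE s in lborel. 0 \<le> g s"
    by (intro AE_I2) (meson not_le)
  then have "0 < (LINT s|lborel. g s)"
    using assms by (intro integral_pos_of_pos_on_interval) auto
  then show False using assms(2) by simp
qed

lemma integral_pos_of_affine_separation:
  fixes g h :: "real \<Rightarrow> real"
  assumes "integrable lborel g" "integrable lborel (\<lambda>s. s * g s)"
    and "(LINT s|lborel. g s) = 0" "(LINT s|lborel. s * g s) = 0"
    and "integrable lborel (\<lambda>s. g s * h s)"
    and "\<And>s. 0 \<le> (h s - (\<alpha> + \<beta> * s)) * g s"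
    and "c < d" "\<And>s. c < s \<Longrightarrow> s < d \<Longrightarrow> 0 < (h s - (\<alpha> + \<beta> * s)) * g s"
  shows "0 < (LINT s|lborel. g s * h s)"
proof -
  have eq: "(\<lambda>s. (h s - (\<alpha> + \<beta> * s)) * g s) = (\<lambda>s. g s * h s - \<alpha> * g s - \<beta> * (s * g s))"
    by (auto simp: algebra_simps)
  have "0 < (LINT s|lborel. (h s - (\<alpha> + \<beta> * s)) * g s)"
    by (rule integral_pos_of_pos_on_interval) (use assms in \<open>auto simp: eq\<close>)
  also have "\<dots> = (LINT s|lborel. g s * h s)"
    unfolding eq using assms by simp
  finally show ?thesis .
qed

lemma convex_on_neg_between:
  fixes \<psi> :: "real \<Rightarrow> real"
  assumes "convex_on I \<psi>" "y \<in> I" "z \<in> I" "y < w" "w < z"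
    and "\<psi> y \<le> 0" "\<psi> z \<le> 0" "\<psi> y < 0 \<or> \<psi> z < 0"
  shows "\<psi> w < 0"
proof -
  define t where "t = (w - y) / (z - y)"
  have t: "0 < t" "t < 1" using assms(4,5) by (auto simp: t_def field_simps)
  have "t * (z - y) = w - y" using assms(4,5) by (simp add: t_def)
  then have "w = (1 - t) *\<^sub>R y + t *\<^sub>R z" by (simp add: algebra_simps)
  then have "\<psi> w \<le> (1 - t) * \<psi> y + t * \<psi> z"
    using convex_onD[OF assms(1)] t assms(2,3) by simp
  also have "\<dots> < 0"
    using t assms(6-8) by (smt (verit) mult_pos_neg mult_nonneg_nonpos)
  finally show ?thesis .
qed

lemma convex_on_sign_pattern:
  fixes \<psi> :: "real \<Rightarrow> real"
  assumes cvx: "convex_on {a<..<b} \<psi>" and s0: "a < s0" "s0 < b" "\<psi> s0 < 0"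
  obtains p q where "a \<le> p" "p \<le> q" "q \<le> b"
    "\<And>s. a < s \<Longrightarrow> s < p \<Longrightarrow> 0 < \<psi> s" "\<And>s. q < s \<Longrightarrow> s < b \<Longrightarrow> 0 < \<psi> s"
    "\<And>s. p < s \<Longrightarrow> s < q \<Longrightarrow> \<psi> s < 0"
proof
  define Z where "Z = {s. a < s \<and> s < b \<and> \<psi> s < 0}"
  have Z: "s0 \<in> Z" "bdd_below Z" "bdd_above Z"
    using s0 by (auto simp: Z_def intro: bdd_belowI[of _ a] bdd_aboveI[of _ b])
  then have Z_bounds: "Inf Z \<le> s" "s \<le> Sup Z" if "s \<in> Z" for s
    using that by (auto intro: cInf_lower cSup_upper)
  show "a \<le> Inf Z" "Inf Z \<le> Sup Z" "Sup Z \<le> b"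
    using Z Z_bounds[of s0] by (auto simp: Z_def intro!: cInf_greatest cSup_least)
  show "\<psi> s < 0" if s: "Inf Z < s" "s < Sup Z" for s
  proof -
    obtain y where "y \<in> Z" "y < s" using s(1) Z cInf_less_iff by blast
    moreover obtain z where "z \<in> Z" "s < z" using s(2) Z less_cSup_iff by blast
    ultimately show ?thesis
      by (intro convex_on_neg_between[OF cvx, of y z]) (auto simp: Z_def)
  qed
  show "0 < \<psi> s" if "a < s" "s < Inf Z" for s
  proof (rule ccontr)
    assume "\<not> 0 < \<psi> s"
    define w where "w = (s + Inf Z) / 2"
    have w: "s < w" "w < Inf Z" "Inf Z \<le> s0" using that Z_bounds[of s0] Z by (auto simp: w_def)
    then have "\<psi> w < 0"
      using that s0 \<open>\<not> 0 < \<psi> s\<close> by (intro convex_on_neg_between[OF cvx, of s s0]) auto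
    then have "w \<in> Z" using w that s0 by (auto simp: Z_def)
    then show False using Z_bounds[of w] w by simp
  qed
  show "0 < \<psi> s" if "Sup Z < s" "s < b" for s
  proof (rule ccontr)
    assume "\<not> 0 < \<psi> s"
    define w where "w = (s + Sup Z) / 2"
    have w: "w < s" "Sup Z < w" "s0 \<le> Sup Z" using that Z_bounds[of s0] Z by (auto simp: w_def)
    then have "\<psi> w < 0"
      using that s0 \<open>\<not> 0 < \<psi> s\<close> by (intro convex_on_neg_between[OF cvx, of s0 s]) auto
    then have "w \<in> Z" using w that s0 by (auto simp: Z_def)
    then show False using Z_bounds[of w] w by simp
  qed
qed

lemma convex_on_ln_combination:
  fixes c d K :: real
  assumes "c \<le> 0" "d \<le> 0"
  shows "convex_on {0<..<1} (\<lambda>s. K + c * ln s + d * ln (1 - s))"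
proof (rule convex_on_realI[where f' = "\<lambda>s. c / s - d / (1 - s)"])
  show "((\<lambda>s. K + c * ln s + d * ln (1 - s)) has_real_derivative c / s - d / (1 - s)) (at s)"
    if "s \<in> {0<..<1}" for s
    using that by (auto intro!: derivative_eq_intros simp: field_simps)
  show "c / s - d / (1 - s) \<le> c / t - d / (1 - t)" if "s \<in> {0<..<1}" "t \<in> {0<..<1}" "s \<le> t" for s t
  proof -
    have "c / s \<le> c / t" using that assms by (intro divide_left_mono_neg) auto
    moreover have "d / (1 - t) \<le> d / (1 - s)" using that assms by (intro divide_left_mono_neg) auto
    ultimately show ?thesis by simp
  qed
qed simp

lemma ln_combination_pos_near_0:
  fixes c d K s :: real
  assumes "c < 0" "d \<le> 0" "0 < s" "s < 1" "s < exp (- K / c)"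
  shows "0 < K + c * ln s + d * ln (1 - s)"
proof -
  have "ln s < ln (exp (- K / c))" using assms(3,5) by (subst ln_less_cancel_iff) auto
  then have "- K < ln s * c" using assms(1) neg_less_divide_eq[of c "ln s" "- K"] by simp
  moreover have "0 \<le> d * ln (1 - s)" using assms(2-4) by (simp add: mult_nonpos_nonpos)
  ultimately show ?thesis by (simp add: mult.commute)
qed

(* D is (q - p) times the gap between the hinge max (x - s) 0 and its chord through p and q. *)
lemma hinge_chord_sign:
  fixes p q x s :: real
  assumes "p < q"
  defines "D \<equiv> (q - p) * max (x - s) 0 - (q - s) * max (x - p) 0 - (s - p) * max (x - q) 0"
  shows "p \<le> s \<Longrightarrow> s \<le> q \<Longrightarrow> D \<le> 0"
    and "s \<le> p \<or> q \<le> s \<Longrightarrow> 0 \<le> D"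
    and "s < p \<Longrightarrow> s < x \<Longrightarrow> x < q \<Longrightarrow> 0 < D"
    and "q < s \<Longrightarrow> p < x \<Longrightarrow> x < s \<Longrightarrow> 0 < D"
proof -
  have "D = (if x \<le> p then (q - p) * max (x - s) 0 else if q \<le> x then (q - p) * max (s - x) 0
      else if s \<le> x then (x - q) * (s - p) else (x - p) * (s - q))"
    using assms(1) by (auto simp: D_def max_def algebra_simps)
  then show "p \<le> s \<Longrightarrow> s \<le> q \<Longrightarrow> D \<le> 0" "s \<le> p \<or> q \<le> s \<Longrightarrow> 0 \<le> D"
    "s < p \<Longrightarrow> s < x \<Longrightarrow> x < q \<Longrightarrow> 0 < D" "q < s \<Longrightarrow> p < x \<Longrightarrow> x < s \<Longrightarrow> 0 < D"
    using assms(1) by (auto simp: mult_le_0_iff zero_le_mult_iff zero_less_mult_iff max_def)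
qed

lemma integrable_mult_hinge:
  fixes f :: "real \<Rightarrow> real"
  assumes "integrable lborel f" "\<And>s. s \<le> 0 \<Longrightarrow> f s = 0" "x \<le> 1"
  shows "integrable lborel (\<lambda>s. f s * max (x - s) 0)"
proof (rule Bochner_Integration.integrable_bound[OF assms(1)])
  have "norm (f s * max (x - s) 0) \<le> norm (f s)" for s
  proof (cases "0 < s")
    case True
    then have "max (x - s) 0 \<le> 1" using assms(3) by simp
    then show ?thesis by (simp add: abs_mult mult_left_le)
  qed (simp add: assms(2))
  then show "AE s in lborel. norm (f s * max (x - s) 0) \<le> norm (f s)" by simp
qed (use assms(1) in simp)

lemma zero_integral_sign_pattern_proper:
  fixes g :: "real \<Rightarrow> real"
  assumes g_int: "integrable lborel g" and g_zero: "(LINT s|lborel. g s) = 0"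
    and supp: "\<And>s. \<not> (0 < s \<and> s < 1) \<Longrightarrow> g s = 0"
    and pq: "0 \<le> p" "p \<le> q" "q \<le> 1"
    and pos: "\<And>s. 0 < s \<Longrightarrow> s < p \<Longrightarrow> 0 < g s" "\<And>s. q < s \<Longrightarrow> s < 1 \<Longrightarrow> 0 < g s"
    and neg: "\<And>s. p < s \<Longrightarrow> s < q \<Longrightarrow> g s < 0"
  shows "p < q" "0 < p \<or> q < 1"
proof -
  show "p < q"
  proof (rule ccontr)
    assume "\<not> p < q"
    then have "q = p" using pq by simp
    have "0 \<le> g s" if "s \<noteq> p" for s
    proof (cases "0 < s \<and> s < 1")
      case True
      then have "s < p \<or> q < s" using that \<open>q = p\<close> by linarith
      then show ?thesis using True pos by (auto intro: less_imp_le)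
    qed (simp add: supp)
    then have "AE s in lborel. 0 \<le> g s"
      using AE_lborel_singleton[of p] by (auto elim: AE_mp)
    moreover obtain c d where "c < d" "\<And>s. c < s \<Longrightarrow> s < d \<Longrightarrow> 0 < g s"
    proof (cases "0 < p")
      case True
      then show ?thesis using that[of 0 p] pos(1) by blast
    next
      case False
      then show ?thesis using that[of q 1] pos(2) pq \<open>q = p\<close> by simp
    qed
    ultimately have "0 < (LINT s|lborel. g s)"
      by (rule integral_pos_of_pos_on_interval[OF g_int])
    then show False using g_zero by simp
  qed
  show "0 < p \<or> q < 1"
  proof (rule ccontr)
    assume "\<not> (0 < p \<or> q < 1)"
    then have g_neg: "g s < 0" if "0 < s" "s < 1" for s
      using pq neg that by simp
    have "\<exists>s. - g s < 0"
      using g_int g_zero g_neg by (intro neg_point_of_integral_eq_0[where c = 0 and d = 1]) auto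
    then obtain s where "0 < g s" by auto
    then show False
      using g_neg[of s] supp[of s] by (cases "0 < s \<and> s < 1") auto
  qed
qed

lemma hinge_chord_mult_nonneg:
  fixes g :: "real \<Rightarrow> real"
  assumes supp: "\<And>s. \<not> (0 < s \<and> s < 1) \<Longrightarrow> g s = 0" and "p < q"
    and pos: "\<And>s. 0 < s \<Longrightarrow> s < p \<Longrightarrow> 0 < g s" "\<And>s. q < s \<Longrightarrow> s < 1 \<Longrightarrow> 0 < g s"
    and neg: "\<And>s. p < s \<Longrightarrow> s < q \<Longrightarrow> g s < 0"
  shows "0 \<le> ((q - p) * max (x - s) 0 - (q - s) * max (x - p) 0 - (s - p) * max (x - q) 0) * g s"
    (is "0 \<le> ?D * g s")
proof -
  note D_sign = hinge_chord_sign[OF \<open>p < q\<close>, where x = x and s = s]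
  consider "p < s \<and> s < q" | "s = p \<or> s = q" | "s < p \<or> q < s" by linarith
  then show ?thesis
  proof cases
    case 1
    then show ?thesis using D_sign(1) neg by (simp add: mult_nonpos_nonpos less_imp_le)
  next
    case 2
    then have "?D \<le> 0" "0 \<le> ?D" using D_sign(1,2) \<open>p < q\<close> by auto
    then show ?thesis by simp
  next
    case 3
    then have "0 \<le> g s" using pos supp by (cases "0 < s \<and> s < 1") (auto intro: less_imp_le)
    moreover have "0 \<le> ?D" using D_sign(2) 3 by auto
    ultimately show ?thesis by simp
  qed
qed

lemma hinge_integral_pos_of_sign_pattern:
  fixes g :: "real \<Rightarrow> real"
  assumes g_int: "integrable lborel g" "integrable lborel (\<lambda>s. s * g s)"
    and moments: "(LINT s|lborel. g s) = 0" "(LINT s|lborel. s * g s) = 0"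
    and supp: "\<And>s. \<not> (0 < s \<and> s < 1) \<Longrightarrow> g s = 0"
    and pq: "0 \<le> p" "p \<le> q" "q \<le> 1"
    and pos: "\<And>s. 0 < s \<Longrightarrow> s < p \<Longrightarrow> 0 < g s" "\<And>s. q < s \<Longrightarrow> s < 1 \<Longrightarrow> 0 < g s"
    and neg: "\<And>s. p < s \<Longrightarrow> s < q \<Longrightarrow> g s < 0"
    and x: "0 < x" "x < 1"
  shows "0 < (LINT s|lborel. g s * max (x - s) 0)"
proof -
  note proper = zero_integral_sign_pattern_proper[OF g_int(1) moments(1) supp pq pos neg]
  define h where "h s = max (x - s) 0" for s
  define \<beta> where "\<beta> = (h q - h p) / (q - p)"
  define \<alpha> where "\<alpha> = (q * h p - p * h q) / (q - p)"
  define D where "D s = (q - p) * h s - (q - s) * h p - (s - p) * h q" for s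
  have chord: "h s - (\<alpha> + \<beta> * s) = D s / (q - p)" for s
    using proper(1) by (simp add: \<alpha>_def \<beta>_def D_def divide_simps) (simp add: algebra_simps)
  have "0 \<le> D s * g s" for s
    unfolding D_def h_def by (rule hinge_chord_mult_nonneg) (use supp proper(1) pos neg in auto)
  then have sep: "0 \<le> (h s - (\<alpha> + \<beta> * s)) * g s" for s
    using proper(1) by (simp add: chord)
  note D_sign = hinge_chord_sign[OF proper(1), where x = x, folded h_def, folded D_def]
  obtain c d where "c < d" "\<And>s. c < s \<Longrightarrow> s < d \<Longrightarrow> 0 < D s * g s"
  proof (cases "q \<le> x")
    case True
    then show ?thesis using that[of x 1] x proper(1) D_sign(4) pos(2) by simp
  next
    case False
    show ?thesis
    proof (cases "0 < p")
      case True
      then show ?thesis using that[of 0 "min p x"] x False D_sign(3) pos(1) by simp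
    next
      case False
      then show ?thesis using that[of q 1] x \<open>\<not> q \<le> x\<close> proper D_sign(4) pos(2) pq by simp
    qed
  qed
  then have strict: "0 < (h s - (\<alpha> + \<beta> * s)) * g s" if "c < s" "s < d" for s
    using that proper(1) by (simp add: chord)
  have "integrable lborel (\<lambda>s. g s * h s)"
    unfolding h_def using g_int(1) supp x by (intro integrable_mult_hinge) auto
  then show ?thesis
    using integral_pos_of_affine_separation[OF g_int moments _ sep \<open>c < d\<close> strict]
    by (simp add: h_def)
qed

lemma beta_density_diff_sign_pattern:
  fixes a1 b1 a2 b2 :: real
  assumes pos: "0 < a1" "0 < b1" "0 < a2" "0 < b2" and less: "a2 < a1" "b2 < b1"
  defines "g \<equiv> \<lambda>s. beta_density a2 b2 s - beta_density a1 b1 s"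
  obtains p q where "0 \<le> p" "p \<le> q" "q \<le> 1"
    "\<And>s. 0 < s \<Longrightarrow> s < p \<Longrightarrow> 0 < g s" "\<And>s. q < s \<Longrightarrow> s < 1 \<Longrightarrow> 0 < g s"
    "\<And>s. p < s \<Longrightarrow> s < q \<Longrightarrow> g s < 0"
proof -
  define K where "K = ln (Beta a1 b1) - ln (Beta a2 b2)"
  define \<psi> where "\<psi> s = K + (a2 - a1) * ln s + (b2 - b1) * ln (1 - s)" for s
  have sign: "(0 < g s \<longleftrightarrow> 0 < \<psi> s) \<and> (g s < 0 \<longleftrightarrow> \<psi> s < 0)" if "0 < s" "s < 1" for s
  proof -
    have "\<psi> s = ln (beta_density a2 b2 s) - ln (beta_density a1 b1 s)"
      using pos that by (simp add: ln_beta_density \<psi>_def K_def algebra_simps)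
    then show ?thesis
      using beta_density_pos[OF pos(1,2) that] beta_density_pos[OF pos(3,4) that] by (auto simp: g_def)
  qed
  have cvx: "convex_on {0<..<1} \<psi>"
    unfolding \<psi>_def using less by (intro convex_on_ln_combination) auto
  have "\<exists>s. g s < 0"
  proof (rule neg_point_of_integral_eq_0)
    show "integrable lborel g" "(LINT s|lborel. g s) = 0"
      using pos by (simp_all add: g_def beta_density_integrable integral_beta_density)
    show "0 < g s" if "0 < s" "s < min 1 (exp (- K / (a2 - a1)))" for s
      using that sign[of s] ln_combination_pos_near_0[of "a2 - a1" "b2 - b1" s K] less
      by (simp add: \<psi>_def)
  qed simp
  then obtain s0 where "g s0 < 0" by blast
  moreover have "0 < s0 \<and> s0 < 1"
  proof (rule ccontr)
    assume "\<not> ?thesis"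
    then have "g s0 = 0" by (simp add: g_def beta_density_eq_0)
    with \<open>g s0 < 0\<close> show False by simp
  qed
  ultimately have s0: "0 < s0" "s0 < 1" "\<psi> s0 < 0"
    using sign[of s0] by auto
  obtain p q where pq: "0 \<le> p" "p \<le> q" "q \<le> 1"
    and \<psi>_pos: "\<And>s. 0 < s \<Longrightarrow> s < p \<Longrightarrow> 0 < \<psi> s" "\<And>s. q < s \<Longrightarrow> s < 1 \<Longrightarrow> 0 < \<psi> s"
    and \<psi>_neg: "\<And>s. p < s \<Longrightarrow> s < q \<Longrightarrow> \<psi> s < 0"
    using cvx s0 by (rule convex_on_sign_pattern) (rule that)
  show ?thesis
  proof (rule that[OF pq])
    show "0 < g s" if "0 < s" "s < p" for s using that pq \<psi>_pos(1) sign[of s] by simp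
    show "0 < g s" if "q < s" "s < 1" for s using that pq \<psi>_pos(2) sign[of s] by simp
    show "g s < 0" if "p < s" "s < q" for s using that pq \<psi>_neg sign[of s] by simp
  qed
qed

lemma integral_beta_density_hinge_less:
  fixes a1 b1 a2 b2 x :: real
  assumes pos: "0 < a1" "0 < b1" "0 < a2" "0 < b2" and less: "a2 < a1" "b2 < b1"
    and mean: "a1 / (a1 + b1) = a2 / (a2 + b2)" and x: "0 < x" "x < 1"
  shows "(LINT s|lborel. beta_density a1 b1 s * max (x - s) 0)
    < (LINT s|lborel. beta_density a2 b2 s * max (x - s) 0)"
proof -
  define g where "g = (\<lambda>s. beta_density a2 b2 s - beta_density a1 b1 s)"
  have g_int: "integrable lborel g" "integrable lborel (\<lambda>s. s * g s)"
    using pos by (simp_all add: g_def beta_density_integrable beta_density_mean_integrable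
        right_diff_distrib)
  have moments: "(LINT s|lborel. g s) = 0" "(LINT s|lborel. s * g s) = 0"
    using pos mean by (simp_all add: g_def beta_density_integrable beta_density_mean_integrable
        integral_beta_density integral_beta_density_mean right_diff_distrib)
  obtain p q where "0 \<le> p" "p \<le> q" "q \<le> 1"
    "\<And>s. 0 < s \<Longrightarrow> s < p \<Longrightarrow> 0 < g s" "\<And>s. q < s \<Longrightarrow> s < 1 \<Longrightarrow> 0 < g s"
    "\<And>s. p < s \<Longrightarrow> s < q \<Longrightarrow> g s < 0"
    using beta_density_diff_sign_pattern[OF pos less] unfolding g_def by blast
  then have "0 < (LINT s|lborel. g s * max (x - s) 0)"
    using g_int moments x
    by (intro hinge_integral_pos_of_sign_pattern) (auto simp: g_def beta_density_eq_0)
  moreover have "integrable lborel (\<lambda>s. beta_density a b s * max (x - s) 0)"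
    if "0 < a" "0 < b" for a b
    using that x by (intro integrable_mult_hinge) (auto simp: beta_density_integrable beta_density_eq_0)
  ultimately show ?thesis
    using pos by (simp add: g_def left_diff_distrib)
qed

lemma nn_integral_hinge:
  fixes c s x :: real
  assumes "0 \<le> c" "0 \<le> s"
  shows "(\<integral>\<^sup>+ t. ennreal (c * indicator {..t} s * indicator {0..x} t) \<partial>lborel)
    = ennreal (c * max (x - s) 0)"
proof -
  have "(\<integral>\<^sup>+ t. ennreal (c * indicator {..t} s * indicator {0..x} t) \<partial>lborel)
      = (\<integral>\<^sup>+ t. ennreal c * indicator {s..x} t \<partial>lborel)"
    using assms(2) by (intro nn_integral_cong) (auto simp: indicator_def)
  also have "\<dots> = ennreal (c * max (x - s) 0)"
    using assms(1) by (simp add: nn_integral_cmult_indicator emeasure_lborel_Icc_eq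
        ennreal_mult[symmetric] max_def)
  finally show ?thesis .
qed

lemma set_integral_cdf_eq_integral_hinge:
  fixes f :: "real \<Rightarrow> real"
  assumes f_meas [measurable]: "f \<in> borel_measurable borel" and f_int: "integrable lborel f"
    and f_nonneg: "\<And>s. 0 \<le> f s" and f_supp: "\<And>s. s < 0 \<Longrightarrow> f s = 0"
  shows "(LBINT t:{0..x}. (LBINT s:{..t}. f s)) = (LINT s|lborel. f s * max (x - s) 0)"
proof -
  define F where "F t = (LBINT s:{..t}. f s)" for t
  have F_int: "integrable lborel (\<lambda>s. f s * indicator {..t} s)" for t
    by (rule integrable_real_mult_indicator) (use f_int in auto)
  have F_eq: "F t = (LINT s|lborel. f s * indicator {..t} s)" for t
    unfolding F_def set_lebesgue_integral_def by (simp add: mult.commute)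
  have F_nn: "ennreal (F t) = (\<integral>\<^sup>+ s. ennreal (f s * indicator {..t} s) \<partial>lborel)" for t
    unfolding F_eq by (rule nn_integral_eq_integral[symmetric]) (use F_int f_nonneg in auto)
  have F_nonneg: "0 \<le> F t" for t
    unfolding F_eq by (rule Bochner_Integration.integral_nonneg) (simp add: f_nonneg)
  have "mono F"
    unfolding F_eq by (intro monoI integral_mono F_int) (auto simp: indicator_def f_nonneg)
  then have [measurable]: "F \<in> borel_measurable borel"
    by (rule borel_measurable_mono)
  have inner: "(\<integral>\<^sup>+ t. ennreal (f s * indicator {..t} s * indicator {0..x} t) \<partial>lborel)
      = ennreal (f s * max (x - s) 0)" for s
    using nn_integral_hinge[OF f_nonneg] f_supp by (cases "0 \<le> s") simp_all
  have "ennreal (indicator {0..x} t * F t)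
      = (\<integral>\<^sup>+ s. ennreal (f s * indicator {..t} s * indicator {0..x} t) \<partial>lborel)" for t
    by (cases "t \<in> {0..x}") (simp_all add: F_nn)
  then have "(\<integral>\<^sup>+ t. ennreal (indicator {0..x} t * F t) \<partial>lborel)
      = (\<integral>\<^sup>+ t. (\<integral>\<^sup>+ s. ennreal (f s * indicator {..t} s * indicator {0..x} t) \<partial>lborel) \<partial>lborel)"
    by simp
  also have "\<dots> = (\<integral>\<^sup>+ s. (\<integral>\<^sup>+ t. ennreal (f s * indicator {..t} s * indicator {0..x} t) \<partial>lborel) \<partial>lborel)"
  proof (rule lborel_pair.Fubini')
    have "(\<lambda>(s, t). ennreal (f s * indicator {..t} s * indicator {0..x} t)) =
        (\<lambda>p. ennreal (f (fst p) * of_bool (fst p \<le> snd p) * of_bool (0 \<le> snd p \<and> snd p \<le> x)))"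
      by (auto simp: indicator_def fun_eq_iff)
    then show "(\<lambda>(s, t). ennreal (f s * indicator {..t} s * indicator {0..x} t))
        \<in> borel_measurable (lborel \<Otimes>\<^sub>M lborel)"
      by simp
  qed
  also have "\<dots> = (\<integral>\<^sup>+ s. ennreal (f s * max (x - s) 0) \<partial>lborel)"
    by (simp add: inner)
  finally have "(LBINT t:{0..x}. F t) = enn2real (\<integral>\<^sup>+ s. ennreal (f s * max (x - s) 0) \<partial>lborel)"
    unfolding set_lebesgue_integral_def
    by (subst integral_eq_nn_integral) (auto simp: F_nonneg)
  also have "\<dots> = (LINT s|lborel. f s * max (x - s) 0)"
    by (rule integral_eq_nn_integral[symmetric]) (auto simp: f_nonneg)
  finally show ?thesis unfolding F_def .
qed

lemma Y_MV_eq_integral_hinge: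
  assumes "0 < beta_alpha M V" "0 < beta_beta M V"
  shows "Y_MV M V x
    = (LINT s|lborel. beta_density (beta_alpha M V) (beta_beta M V) s * max (x - s) 0)"
  unfolding Y_MV_def F_MV_def using assms
  by (intro set_integral_cdf_eq_integral_hinge)
    (auto simp: beta_density_integrable beta_density_nonneg beta_density_eq_0)

theorem lemma7:
  fixes M x :: real
  assumes "0 < M" "M < 1" "0 < x" "x < 1"
  shows "strict_mono_on {0<..<M - M^2} (\<lambda>V. Y_MV M V x)"
proof (rule strict_mono_onI)
  fix V1 V2
  assume V: "V1 \<in> {0<..<M - M^2}" "V2 \<in> {0<..<M - M^2}" "V1 < V2"
  define n where "n V = (M - M^2 - V) / V" for V
  have params: "beta_alpha M V = M * n V" "beta_beta M V = (1 - M) * n V" for V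
    by (simp_all add: beta_alpha_def beta_beta_def n_def)
  have n_pos: "0 < n V1" "0 < n V2"
    using V by (simp_all add: n_def)
  have "(M - M^2) / V2 < (M - M^2) / V1"
    using V by (intro divide_strict_left_mono) auto
  then have "n V2 < n V1"
    using V by (simp add: n_def diff_divide_distrib)
  moreover have "M * n V / (M * n V + (1 - M) * n V) = M" if "0 < n V" for V
    using that by (simp add: algebra_simps)
  ultimately show "Y_MV M V1 x < Y_MV M V2 x"
    using assms n_pos
    by (simp add: Y_MV_eq_integral_hinge params integral_beta_density_hinge_less)
qed

end
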